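(* Let $\mathbb{D}$ be a division ring, let $2\le m,n<\infty$, let $P$ be an $n\times m$ matrix over $\mathbb{D}$ with $\operatorname{rank}P=r$, and let $\mathcal{A}=\mathfrak{M}(\mathbb{D}, m, n, P)$. Then: (1) if $r\ge 2$, then $\mathcal{A}=\sum[\mathcal{A},\mathcal{A}][\mathcal{A},\mathcal{A}]$, i.e. every element of $\mathcal{A}$ is a finite sum of products of pairs of commutators; (2) if $r=1$, then $\mathcal{A}=\sum[\mathcal{A},\mathcal{A}][\mathcal{A},\mathcal{A}]$ if and only if $\mathbb{D}$ is not commutative.
   Context: $\mathfrak{M}(\mathbb{D}, m, n, P)$ denotes the ring of all $m\times n$ matrices over the division ring $\mathbb{D}$ with entrywise addition and multiplication $A\bullet B = APB$. The commutator is $[x,y]=x\bullet y-y\bullet x$; for subsets $X,Y$, $[X,Y]=\{[x,y]:x\in X,y\in Y\}$ and $XY=\{x\bullet y: x\in X, y\in Y\}$. $\sum[\mathcal{A},\mathcal{A}][\mathcal{A},\mathcal{A}]$ denotes the set of all finite sums of elements of $[\mathcal{A},\mathcal{A}][\mathcal{A},\mathcal{A}]$. *)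

theory Defs
  imports Main
begin

text \<open>Matrices over a ring 'a are represented as functions nat => nat => 'a.
  The k x l matrices are those functions vanishing outside the index box
  {..<k} x {..<l}.\<close>

definition mat_set :: "nat \<Rightarrow> nat \<Rightarrow> (nat \<Rightarrow> nat \<Rightarrow> 'a::zero) set" where
  "mat_set k l = {A. \<forall>i j. A i j \<noteq> 0 \<longrightarrow> i < k \<and> j < l}"

definition mat_add :: "(nat \<Rightarrow> nat \<Rightarrow> 'a::plus) \<Rightarrow> (nat \<Rightarrow> nat \<Rightarrow> 'a) \<Rightarrow> nat \<Rightarrow> nat \<Rightarrow> 'a" where
  "mat_add A B = (\<lambda>i j. A i j + B i j)"

definition mat_sub :: "(nat \<Rightarrow> nat \<Rightarrow> 'a::minus) \<Rightarrow> (nat \<Rightarrow> nat \<Rightarrow> 'a) \<Rightarrow> nat \<Rightarrow> nat \<Rightarrow> 'a" where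
  "mat_sub A B = (\<lambda>i j. A i j - B i j)"

definition mat_mult :: "nat \<Rightarrow> (nat \<Rightarrow> nat \<Rightarrow> 'a::semiring_0) \<Rightarrow> (nat \<Rightarrow> nat \<Rightarrow> 'a) \<Rightarrow> nat \<Rightarrow> nat \<Rightarrow> 'a" where
  "mat_mult p A B = (\<lambda>i j. \<Sum>k<p. A i k * B k j)"

text \<open>Sandwich product A \<bullet> B = A P B in M(D, m, n, P), A, B m x n, P n x m.\<close>
definition sandwich :: "nat \<Rightarrow> nat \<Rightarrow> (nat \<Rightarrow> nat \<Rightarrow> 'a::semiring_0) \<Rightarrow> (nat \<Rightarrow> nat \<Rightarrow> 'a) \<Rightarrow> (nat \<Rightarrow> nat \<Rightarrow> 'a) \<Rightarrow> nat \<Rightarrow> nat \<Rightarrow> 'a" where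
  "sandwich m n P A B = mat_mult m (mat_mult n A P) B"

definition comm :: "nat \<Rightarrow> nat \<Rightarrow> (nat \<Rightarrow> nat \<Rightarrow> 'a::ring) \<Rightarrow> (nat \<Rightarrow> nat \<Rightarrow> 'a) \<Rightarrow> (nat \<Rightarrow> nat \<Rightarrow> 'a) \<Rightarrow> nat \<Rightarrow> nat \<Rightarrow> 'a" where
  "comm m n P A B = mat_sub (sandwich m n P A B) (sandwich m n P B A)"

definition comm_prods :: "nat \<Rightarrow> nat \<Rightarrow> (nat \<Rightarrow> nat \<Rightarrow> 'a::ring) \<Rightarrow> (nat \<Rightarrow> nat \<Rightarrow> 'a) set" where
  "comm_prods m n P = {sandwich m n P (comm m n P a b) (comm m n P c d) | a b c d.
      a \<in> mat_set m n \<and> b \<in> mat_set m n \<and> c \<in> mat_set m n \<and> d \<in> mat_set m n}"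

inductive_set fin_sums :: "(nat \<Rightarrow> nat \<Rightarrow> 'a::monoid_add) set \<Rightarrow> (nat \<Rightarrow> nat \<Rightarrow> 'a) set"
  for S where
  zero: "(\<lambda>i j. 0) \<in> fin_sums S"
| add: "x \<in> S \<Longrightarrow> y \<in> fin_sums S \<Longrightarrow> mat_add x y \<in> fin_sums S"

definition cols_indep :: "nat \<Rightarrow> (nat \<Rightarrow> nat \<Rightarrow> 'a::ring) \<Rightarrow> nat set \<Rightarrow> bool" where
  "cols_indep k P S = (\<forall>c::nat \<Rightarrow> 'a. (\<forall>i<k. (\<Sum>j\<in>S. P i j * c j) = 0) \<longrightarrow> (\<forall>j\<in>S. c j = 0))"

definition mat_rank :: "nat \<Rightarrow> nat \<Rightarrow> (nat \<Rightarrow> nat \<Rightarrow> 'a::ring) \<Rightarrow> nat" where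
  "mat_rank k l P = Max {card S | S. S \<subseteq> {..<l} \<and> cols_indep k P S}"

end

theory Submission
  imports Defs
begin

text \<open>
  Every m x n matrix is a sum of rank-one matrices p q^T, and on these the sandwich product is
  (p q^T) P (p' q'^T) = p (q^T P p') q'^T, so everything is governed by the pairing q^T P p
  (bil_form). If rank P \<ge> 2 there are u1, u2, z1, z2 with z_i^T P u_j = \<delta>_ij, and each p q^T is
  the sum of two products of commutators of rank-one matrices built from them. If rank P = 1 and
  D is not commutative, one pair with z^T P w = 1 suffices: e = w z^T is an idempotent, each
  Peirce component of p q^T relative to e is a product of two commutators, and the corner e A e,
  a copy of D, is covered by the identity [ua,b][a,b] + [b,u][a,ab] = u [a,b]^2. If rank P = 1
  and D is a field, then P = \<alpha> \<beta>^T, and X \<mapsto> \<beta>^T X \<alpha> is a linear functional that is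
  multiplicative for the sandwich product; it therefore vanishes on all products of
  commutators, but not on the matrix units.
\<close>

definition vec_set :: "nat \<Rightarrow> (nat \<Rightarrow> 'a::zero) set" where
  "vec_set k = {v. \<forall>i\<ge>k. v i = 0}"

definition unit_vec :: "nat \<Rightarrow> nat \<Rightarrow> 'a::{zero,one}" where
  "unit_vec k = (\<lambda>i. if i = k then 1 else 0)"

definition outer :: "(nat \<Rightarrow> 'a::times) \<Rightarrow> (nat \<Rightarrow> 'a) \<Rightarrow> nat \<Rightarrow> nat \<Rightarrow> 'a" where
  "outer p q = (\<lambda>i j. p i * q j)"

definition bil_form ::
    "nat \<Rightarrow> nat \<Rightarrow> (nat \<Rightarrow> nat \<Rightarrow> 'a::semiring_0) \<Rightarrow> (nat \<Rightarrow> 'a) \<Rightarrow> (nat \<Rightarrow> 'a) \<Rightarrow> 'a" where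
  "bil_form m n P q p = (\<Sum>k<m. (\<Sum>l<n. q l * P l k) * p k)"

lemma mat_set_iff: "A \<in> mat_set k l \<longleftrightarrow> (\<forall>i j. k \<le> i \<or> l \<le> j \<longrightarrow> A i j = 0)"
  unfolding mat_set_def by (auto simp: not_le[symmetric])

lemma unit_vec_in_vec_set: "i < k \<Longrightarrow> unit_vec i \<in> vec_set k"
  by (simp add: vec_set_def unit_vec_def)

lemma vec_set_mult_left: "p \<in> vec_set k \<Longrightarrow> (\<lambda>i. y * p i :: 'a::mult_zero) \<in> vec_set k"
  by (simp add: vec_set_def)

lemma vec_set_mult_right: "p \<in> vec_set k \<Longrightarrow> (\<lambda>i. p i * y :: 'a::mult_zero) \<in> vec_set k"
  by (simp add: vec_set_def)

lemma vec_set_diff: "p \<in> vec_set k \<Longrightarrow> q \<in> vec_set k \<Longrightarrow> (\<lambda>i. p i - q i :: 'a::group_add) \<in> vec_set k"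
  by (simp add: vec_set_def)

lemma outer_in_mat_set:
  "p \<in> vec_set m \<Longrightarrow> q \<in> vec_set n \<Longrightarrow> outer p (q::nat \<Rightarrow> 'a::mult_zero) \<in> mat_set m n"
  by (auto simp: mat_set_iff vec_set_def outer_def)

lemma mat_add_in_mat_set:
  "A \<in> mat_set m n \<Longrightarrow> B \<in> mat_set m n \<Longrightarrow> mat_add A (B::nat \<Rightarrow> nat \<Rightarrow> 'a::monoid_add) \<in> mat_set m n"
  by (simp add: mat_set_iff mat_add_def)

lemma mat_sub_in_mat_set:
  "A \<in> mat_set m n \<Longrightarrow> B \<in> mat_set m n \<Longrightarrow> mat_sub A (B::nat \<Rightarrow> nat \<Rightarrow> 'a::group_add) \<in> mat_set m n"
  by (simp add: mat_set_iff mat_sub_def)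

lemma sandwich_in_mat_set:
  "A \<in> mat_set m n \<Longrightarrow> B \<in> mat_set m n \<Longrightarrow> sandwich m n P A (B::nat \<Rightarrow> nat \<Rightarrow> 'a::semiring_0) \<in> mat_set m n"
  by (auto simp: mat_set_iff sandwich_def mat_mult_def)

lemma comm_in_mat_set:
  "A \<in> mat_set m n \<Longrightarrow> B \<in> mat_set m n \<Longrightarrow> comm m n P A (B::nat \<Rightarrow> nat \<Rightarrow> 'a::ring) \<in> mat_set m n"
  unfolding comm_def by (intro mat_sub_in_mat_set sandwich_in_mat_set)

lemma fin_sums_mat_add:
  assumes "x \<in> fin_sums S" "y \<in> fin_sums S"
  shows "mat_add x (y::nat \<Rightarrow> nat \<Rightarrow> 'a::monoid_add) \<in> fin_sums S"
  using assms
proof (induction x rule: fin_sums.induct)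
  case zero
  then show ?case by (simp add: mat_add_def)
next
  case (add x z)
  have "mat_add (mat_add x z) y = mat_add x (mat_add z y)"
    by (simp add: mat_add_def add.assoc)
  then show ?case using add by (simp add: fin_sums.add)
qed

lemma fin_sums_base: "x \<in> S \<Longrightarrow> (x::nat \<Rightarrow> nat \<Rightarrow> 'a::monoid_add) \<in> fin_sums S"
  using fin_sums.add[OF _ fin_sums.zero, of x S] by (simp add: mat_add_def)

lemma fin_sums_sum:
  assumes "finite K" "\<And>k. k \<in> K \<Longrightarrow> f k \<in> fin_sums S"
  shows "(\<lambda>i j. \<Sum>k\<in>K. f k i j :: 'a::comm_monoid_add) \<in> fin_sums S"
  using assms
proof (induction K rule: finite_induct)
  case empty
  then show ?case by (simp add: fin_sums.zero)
next
  case (insert k K)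
  have "(\<lambda>i j. \<Sum>k\<in>insert k K. f k i j) = mat_add (f k) (\<lambda>i j. \<Sum>k\<in>K. f k i j)"
    using insert by (simp add: mat_add_def)
  then show ?case using insert by (simp add: fin_sums_mat_add)
qed

lemma fin_sums_subset_mat_set:
  assumes "S \<subseteq> mat_set m n"
  shows "fin_sums S \<subseteq> mat_set m (n::nat)"
proof
  fix x :: "nat \<Rightarrow> nat \<Rightarrow> 'a" assume "x \<in> fin_sums S"
  then show "x \<in> mat_set m n"
  proof induction
    case zero
    then show ?case by (simp add: mat_set_iff)
  next
    case (add x y)
    then show ?case using assms by (blast intro: mat_add_in_mat_set)
  qed
qed

lemma comm_prods_subset_mat_set: "comm_prods m n (P::nat \<Rightarrow> nat \<Rightarrow> 'a::ring) \<subseteq> mat_set m n"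
  unfolding comm_prods_def by (auto intro!: sandwich_in_mat_set comm_in_mat_set)

lemma comm_prod_in_fin_sums:
  "a \<in> mat_set m n \<Longrightarrow> b \<in> mat_set m n \<Longrightarrow> c \<in> mat_set m n \<Longrightarrow> d \<in> mat_set m n \<Longrightarrow>
   sandwich m n P (comm m n P a b) (comm m n P c d) \<in> fin_sums (comm_prods m n P)"
  by (rule fin_sums_base) (auto simp: comm_prods_def)

lemma mat_set_eq_fin_sums_comm_prodsI:
  fixes P :: "nat \<Rightarrow> nat \<Rightarrow> 'a::ring_1"
  assumes outer_mem:
    "\<And>p q. p \<in> vec_set m \<Longrightarrow> q \<in> vec_set n \<Longrightarrow> outer p q \<in> fin_sums (comm_prods m n P)"
  shows "mat_set m n = fin_sums (comm_prods m n P)"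
proof
  show "mat_set m n \<subseteq> fin_sums (comm_prods m n P)"
  proof
    fix X :: "nat \<Rightarrow> nat \<Rightarrow> 'a" assume X: "X \<in> mat_set m n"
    have "X = (\<lambda>i j. \<Sum>k<n. outer (\<lambda>i. X i k) (unit_vec k) i j)"
      using X by (intro ext) (auto simp: outer_def unit_vec_def mat_set_iff if_distrib[of "(*) _"] cong: if_cong)
    also have "\<dots> \<in> fin_sums (comm_prods m n P)"
      using X by (intro fin_sums_sum outer_mem unit_vec_in_vec_set) (auto simp: vec_set_def mat_set_iff)
    finally show "X \<in> fin_sums (comm_prods m n P)" .
  qed
  show "fin_sums (comm_prods m n P) \<subseteq> mat_set m n"
    by (intro fin_sums_subset_mat_set comm_prods_subset_mat_set)
qed

lemma sandwich_outer:
  "sandwich m n P (outer p q) (outer p' q') = outer (\<lambda>i. p i * bil_form m n P q p') (q'::nat \<Rightarrow> 'a::semiring_0)"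
  unfolding sandwich_def mat_mult_def outer_def bil_form_def
  by (intro ext) (simp add: sum_distrib_left sum_distrib_right mult.assoc)

lemma sandwich_mat_sub_left:
  "sandwich m n P (mat_sub A B) C = mat_sub (sandwich m n P A C) (sandwich m n P B (C::nat \<Rightarrow> nat \<Rightarrow> 'a::ring))"
  unfolding sandwich_def mat_mult_def mat_sub_def by (simp add: sum_subtractf left_diff_distrib)

lemma sandwich_mat_sub_right:
  "sandwich m n P A (mat_sub B C) = mat_sub (sandwich m n P A B) (sandwich m n P A (C::nat \<Rightarrow> nat \<Rightarrow> 'a::ring))"
  unfolding sandwich_def mat_mult_def mat_sub_def by (simp add: sum_subtractf right_diff_distrib)

lemma comm_outer:
  "comm m n P (outer p q) (outer p' q') =
   mat_sub (outer (\<lambda>i. p i * bil_form m n P q p') q')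
     (outer (\<lambda>i. p' i * bil_form m n P q' p) (q::nat \<Rightarrow> 'a::ring))"
  unfolding comm_def by (simp add: sandwich_outer)

lemmas comm_prod_outer_simps =
  comm_outer sandwich_mat_sub_left sandwich_mat_sub_right sandwich_outer

lemma bil_form_zero_right [simp]: "bil_form m n P q (\<lambda>k. 0) = (0::'a::semiring_0)"
  by (simp add: bil_form_def)

lemma bil_form_mult_left: "bil_form m n P (\<lambda>l. y * q l) p = (y::'a::ring) * bil_form m n P q p"
  unfolding bil_form_def by (simp add: sum_distrib_left sum_distrib_right mult.assoc)

lemma bil_form_mult_right: "bil_form m n P q (\<lambda>k. p k * y) = bil_form m n P q p * (y::'a::ring)"
  unfolding bil_form_def by (simp add: sum_distrib_right mult.assoc)

lemma bil_form_diff_left: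
  "bil_form m n P (\<lambda>l. q l - q' l) p = bil_form m n P q p - bil_form m n P q' (p::nat \<Rightarrow> 'a::ring)"
  unfolding bil_form_def by (simp add: sum_subtractf left_diff_distrib)

lemma bil_form_diff_right:
  "bil_form m n P q (\<lambda>k. p k - p' k) = bil_form m n P q p - bil_form m n P q (p'::nat \<Rightarrow> 'a::ring)"
  unfolding bil_form_def by (simp add: sum_subtractf right_diff_distrib)

lemma bil_form_unit_vec:
  "s < n \<Longrightarrow> k < m \<Longrightarrow> bil_form m n P (unit_vec s) (unit_vec k) = (P s k :: 'a::ring_1)"
  unfolding bil_form_def unit_vec_def by (simp add: if_distrib[of "times _"] if_distrib[of "\<lambda>x. x * _"] cong: if_cong)

lemma bil_form_mat_add:
  "bil_form m n (mat_add A B) q p = bil_form m n A q p + bil_form m n B q (p::nat \<Rightarrow> 'a::ring)"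
  unfolding bil_form_def mat_add_def by (simp add: distrib_left distrib_right sum.distrib)

lemma bil_form_mat_sub:
  "bil_form m n (mat_sub A B) q p = bil_form m n A q p - bil_form m n B q (p::nat \<Rightarrow> 'a::ring)"
  unfolding bil_form_def mat_sub_def by (simp add: right_diff_distrib left_diff_distrib sum_subtractf)

lemma bil_form_outer:
  "bil_form m n (outer p' q') q p = (\<Sum>l<n. q l * p' l) * (\<Sum>k<m. q' k * (p k::'a::ring))"
  unfolding bil_form_def outer_def by (simp add: sum_distrib_left sum_distrib_right mult.assoc)

section \<open>Column independence and rank\<close>

lemma cols_indep_subset:
  assumes indep: "cols_indep n P S" and "T \<subseteq> S" "finite S"
  shows "cols_indep n P T"
  unfolding cols_indep_def
proof (intro allI impI ballI)
  fix c j assume dep: "\<forall>i<n. (\<Sum>j\<in>T. P i j * c j) = 0" and j: "j \<in> T"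
  define c' where "c' j = (if j \<in> T then c j else 0)" for j
  have "(\<Sum>j\<in>S. P i j * c' j) = (\<Sum>j\<in>T. P i j * c j)" for i
  proof -
    have "(\<Sum>j\<in>S. P i j * c' j) = (\<Sum>j\<in>T. P i j * c' j)"
      using assms(2,3) by (intro sum.mono_neutral_right) (auto simp: c'_def)
    also have "\<dots> = (\<Sum>j\<in>T. P i j * c j)" by (simp add: c'_def)
    finally show ?thesis .
  qed
  then have "\<forall>j\<in>S. c' j = 0" using indep dep unfolding cols_indep_def by simp
  then have "c' j = 0" using j assms(2) by blast
  then show "c j = 0" using j by (simp add: c'_def)
qed

lemma cols_indep_pair_iff:
  assumes "k1 \<noteq> k2"
  shows "cols_indep n P {k1, k2} \<longleftrightarrow>
    (\<forall>c1 c2. (\<forall>i<n. P i k1 * c1 + P i k2 * c2 = 0) \<longrightarrow> c1 = 0 \<and> c2 = 0)"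
proof
  assume indep: "cols_indep n P {k1, k2}"
  show "\<forall>c1 c2. (\<forall>i<n. P i k1 * c1 + P i k2 * c2 = 0) \<longrightarrow> c1 = 0 \<and> c2 = 0"
  proof (intro allI impI)
    fix c1 c2 assume rel: "\<forall>i<n. P i k1 * c1 + P i k2 * c2 = 0"
    define c where "c j = (if j = k1 then c1 else c2)" for j
    have "\<forall>i<n. (\<Sum>j\<in>{k1, k2}. P i j * c j) = 0" using rel assms by (simp add: c_def)
    then have "\<forall>j\<in>{k1, k2}. c j = 0" using indep unfolding cols_indep_def by blast
    then show "c1 = 0 \<and> c2 = 0" using assms by (simp add: c_def)
  qed
next
  assume pair: "\<forall>c1 c2. (\<forall>i<n. P i k1 * c1 + P i k2 * c2 = 0) \<longrightarrow> c1 = 0 \<and> c2 = 0"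
  show "cols_indep n P {k1, k2}"
    unfolding cols_indep_def
  proof (intro allI impI)
    fix c assume "\<forall>i<n. (\<Sum>j\<in>{k1, k2}. P i j * c j) = 0"
    then have "\<forall>i<n. P i k1 * c k1 + P i k2 * c k2 = 0" using assms by simp
    then show "\<forall>j\<in>{k1, k2}. c j = 0" using pair by blast
  qed
qed

lemma finite_mat_rank_candidates: "finite {card S | S. S \<subseteq> {..<m} \<and> cols_indep n P S}"
  by (rule finite_subset[of _ "card ` Pow {..<m}"]) auto

lemma card_le_mat_rank: "S \<subseteq> {..<m} \<Longrightarrow> cols_indep n P S \<Longrightarrow> card S \<le> mat_rank n m P"
  unfolding mat_rank_def by (rule Max_ge[OF finite_mat_rank_candidates]) blast

lemma mat_rank_witness:
  obtains S where "S \<subseteq> {..<m}" "cols_indep n P S" "card S = mat_rank n m P"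
proof -
  have "cols_indep n P {}" by (simp add: cols_indep_def)
  then have nonempty: "{card S | S. S \<subseteq> {..<m} \<and> cols_indep n P S} \<noteq> {}" by blast
  have "mat_rank n m P \<in> {card S | S. S \<subseteq> {..<m} \<and> cols_indep n P S}"
    unfolding mat_rank_def by (rule Max_in[OF finite_mat_rank_candidates nonempty])
  then show ?thesis using that by auto
qed

lemma mat_rank_ge_2_obtains_pair:
  assumes "2 \<le> mat_rank n m P"
  obtains k1 k2 where "k1 < m" "k2 < m" "k1 \<noteq> k2" "cols_indep n P {k1, k2}"
proof -
  obtain S where S: "S \<subseteq> {..<m}" "cols_indep n P S" "card S = mat_rank n m P"
    by (rule mat_rank_witness)
  have fin: "finite S" using finite_subset[OF S(1)] by simp
  have "2 \<le> card S" using assms S(3) by simp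
  then obtain T where T: "T \<subseteq> S" "card T = 2" "finite T" by (rule obtain_subset_with_card_n)
  from T(2) obtain k1 k2 where k12: "T = {k1, k2}" "k1 \<noteq> k2" unfolding card_2_iff by blast
  have "cols_indep n P {k1, k2}" using cols_indep_subset[OF S(2) _ fin] T(1) k12(1) by simp
  moreover have "k1 < m" "k2 < m" using S(1) T(1) k12(1) by auto
  ultimately show ?thesis using that k12(2) by blast
qed

lemma mat_rank_eq_1_obtains_column:
  assumes rank: "mat_rank n m P = 1"
  obtains k where "k < m" "cols_indep n P {k}" "\<forall>k'<m. k' \<noteq> k \<longrightarrow> \<not> cols_indep n P {k, k'}"
proof -
  obtain S where S: "S \<subseteq> {..<m}" "cols_indep n P S" "card S = mat_rank n m P"
    by (rule mat_rank_witness)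
  then obtain k where k: "S = {k}" using rank by (auto simp: card_1_singleton_iff)
  have "k < m" "cols_indep n P {k}" using S(1,2) k by auto
  moreover have "\<forall>k'<m. k' \<noteq> k \<longrightarrow> \<not> cols_indep n P {k, k'}"
  proof (intro allI impI notI)
    fix k' assume k': "k' < m" "k' \<noteq> k" and indep: "cols_indep n P {k, k'}"
    have "card {k, k'} \<le> mat_rank n m P"
      using S(1) k k' indep by (intro card_le_mat_rank) auto
    then show False using rank k'(2) by simp
  qed
  ultimately show ?thesis by (rule that)
qed

lemma cols_indep_singleton_obtains_entry:
  fixes P :: "nat \<Rightarrow> nat \<Rightarrow> 'a::ring_1"
  assumes indep: "cols_indep n P {k}"
  obtains s where "s < n" "P s k \<noteq> 0"
proof -
  have "(\<lambda>_. 1::'a) k = 0" if zero: "\<forall>i<n. P i k = 0"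
    using indep[unfolded cols_indep_def, rule_format, of "\<lambda>_. 1" k] zero by simp
  then have "\<exists>s<n. P s k \<noteq> 0" by auto
  then show ?thesis using that by blast
qed

lemma mat_rank_pos_obtains_entry:
  fixes P :: "nat \<Rightarrow> nat \<Rightarrow> 'a::ring_1"
  assumes "0 < mat_rank n m P"
  obtains s k where "s < n" "k < m" "P s k \<noteq> 0"
proof -
  obtain S where S: "S \<subseteq> {..<m}" "cols_indep n P S" "card S = mat_rank n m P"
    by (rule mat_rank_witness)
  have "S \<noteq> {}" using assms S(3) by auto
  then obtain k where k: "k \<in> S" by blast
  have "finite S" using finite_subset[OF S(1)] by simp
  then have "cols_indep n P {k}" using cols_indep_subset[OF S(2)] k by simp
  then obtain s where "s < n" "P s k \<noteq> 0" by (rule cols_indep_singleton_obtains_entry)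
  moreover have "k < m" using S(1) k by auto
  ultimately show ?thesis using that by simp
qed

lemma dual_rows_exist:
  fixes P :: "nat \<Rightarrow> nat \<Rightarrow> 'a::division_ring"
  assumes k1: "k1 < m" and k2: "k2 < m" and ne: "k1 \<noteq> k2" and indep: "cols_indep n P {k1, k2}"
  obtains z1 z2 where "z1 \<in> vec_set n" "z2 \<in> vec_set n"
    "bil_form m n P z1 (unit_vec k1) = 1" "bil_form m n P z2 (unit_vec k2) = 1"
    "bil_form m n P z2 (unit_vec k1) = 0" "bil_form m n P z1 (unit_vec k2) = 0"
proof -
  have pair: "c1 = 0 \<and> c2 = 0" if "\<forall>i<n. P i k1 * c1 + P i k2 * c2 = 0" for c1 c2
    using indep[unfolded cols_indep_pair_iff[OF ne]] that by blast
  have "\<exists>s<n. P s k1 \<noteq> 0"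
  proof (rule ccontr)
    assume "\<not> ?thesis"
    then have "\<forall>i<n. P i k1 * 1 + P i k2 * 0 = 0" by simp
    from pair[OF this] show False by simp
  qed
  then obtain s where s: "s < n" "P s k1 \<noteq> 0" by blast
  \<comment> \<open>z1 and z2 are the rows of a left inverse of the n x 2 matrix formed by the columns
    k1 and k2, obtained by elimination on the pivot P s k1.\<close>
  define e where "e = (\<lambda>l. inverse (P s k1) * unit_vec s l)"
  define y where "y = bil_form m n P e (unit_vec k2)"
  have "\<exists>t<n. P t k2 - P t k1 * y \<noteq> 0"
  proof (rule ccontr)
    assume "\<not> ?thesis"
    then have "\<forall>i<n. P i k1 * - y + P i k2 * 1 = 0" by simp
    from pair[OF this] show False by simp
  qed
  then obtain t where t: "t < n" "P t k2 - P t k1 * y \<noteq> 0" by blast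
  define \<delta> where "\<delta> = P t k2 - P t k1 * y"
  define z2 where "z2 = (\<lambda>l. inverse \<delta> * (unit_vec t l - P t k1 * e l))"
  define z1 where "z1 = (\<lambda>l. e l - y * z2 l)"
  have e: "e \<in> vec_set n" unfolding e_def by (intro vec_set_mult_left unit_vec_in_vec_set s)
  have e1: "bil_form m n P e (unit_vec k1) = 1"
    using s k1 by (simp add: e_def bil_form_mult_left bil_form_unit_vec)
  have z21: "bil_form m n P z2 (unit_vec k1) = 0"
    using t k1 by (simp add: z2_def bil_form_mult_left bil_form_diff_left bil_form_unit_vec e1)
  have z22: "bil_form m n P z2 (unit_vec k2) = 1"
    using t k2 by (simp add: z2_def bil_form_mult_left bil_form_diff_left bil_form_unit_vec
        y_def[symmetric] \<delta>_def[symmetric])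
  have z2: "z2 \<in> vec_set n" and z1: "z1 \<in> vec_set n" unfolding z1_def z2_def
    by (intro vec_set_diff vec_set_mult_left unit_vec_in_vec_set t e)+
  have z11: "bil_form m n P z1 (unit_vec k1) = 1" and z12: "bil_form m n P z1 (unit_vec k2) = 0"
    by (simp_all add: z1_def bil_form_diff_left bil_form_mult_left e1 z21 z22 y_def)
  show ?thesis using z1 z2 z11 z22 z21 z12 by (rule that)
qed

lemma rank_one_factorization:
  fixes P :: "nat \<Rightarrow> nat \<Rightarrow> 'a::division_ring"
  assumes s: "s < n" and nonzero: "P s k0 \<noteq> 0"
    and dep: "\<forall>k<m. k \<noteq> k0 \<longrightarrow> \<not> cols_indep n P {k0, k}"
  obtains \<beta> where "\<forall>l<n. \<forall>k<m. P l k = P l k0 * \<beta> k"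
proof -
  have "\<exists>b. k < m \<longrightarrow> (\<forall>l<n. P l k = P l k0 * b)" for k
  proof (cases "k < m \<and> k \<noteq> k0")
    case False
    then show ?thesis by (intro exI[of _ 1]) auto
  next
    case True
    then have "k0 \<noteq> k" "\<not> cols_indep n P {k0, k}" using dep by auto
    then obtain c1 c2 where c: "c1 \<noteq> 0 \<or> c2 \<noteq> 0" "\<forall>i<n. P i k0 * c1 + P i k * c2 = 0"
      unfolding cols_indep_pair_iff[OF \<open>k0 \<noteq> k\<close>] by blast
    have "c2 \<noteq> 0"
    proof
      assume "c2 = 0"
      then have "P s k0 * c1 = 0" using c(2) s by simp
      then show False using c(1) \<open>c2 = 0\<close> nonzero by simp
    qed
    have "P l k = P l k0 * (- c1 * inverse c2)" if l: "l < n" for l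
    proof -
      have "P l k * c2 = - (P l k0 * c1)" using c(2) l by (simp add: eq_neg_iff_add_eq_0 add.commute)
      then have "P l k = - (P l k0 * c1) * inverse c2"
        using \<open>c2 \<noteq> 0\<close> by (metis mult.assoc right_inverse mult_1_right)
      then show ?thesis by (simp add: mult.assoc)
    qed
    then show ?thesis by blast
  qed
  then obtain \<beta> where "\<forall>k. k < m \<longrightarrow> (\<forall>l<n. P l k = P l k0 * \<beta> k)"
    by (metis choice)
  then show ?thesis using that by blast
qed

section \<open>Rank at least two\<close>

context
  fixes m n :: nat and P :: "nat \<Rightarrow> nat \<Rightarrow> 'a::ring_1" and u1 u2 z1 z2 :: "nat \<Rightarrow> 'a"
  assumes u1: "u1 \<in> vec_set m" and u2: "u2 \<in> vec_set m"
    and z1: "z1 \<in> vec_set n" and z2: "z2 \<in> vec_set n"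
    and dual: "bil_form m n P z1 u1 = 1" "bil_form m n P z2 u2 = 1"
      "bil_form m n P z2 u1 = 0" "bil_form m n P z1 u2 = 0"
begin

lemma comm_prod_dual_pair:
  "sandwich m n P (comm m n P (outer p z1) (outer u1 z2)) (comm m n P (outer u2 z1) (outer u1 q))
   = mat_add (outer p q) (outer (\<lambda>i. u1 i * (bil_form m n P z2 p * bil_form m n P q u2)) z1)"
  by (simp add: comm_prod_outer_simps bil_form_mult_right dual)
    (simp add: mat_sub_def mat_add_def outer_def algebra_simps)

lemma outer_in_fin_sums_dual_pair:
  assumes p: "p \<in> vec_set m" and q: "q \<in> vec_set n"
  shows "outer p q \<in> fin_sums (comm_prods m n P)"
proof -
  define y where "y = bil_form m n P z2 p * bil_form m n P q u2"
  define u where "u = (\<lambda>i. u1 i * - y)"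
  have u: "u \<in> vec_set m" unfolding u_def by (rule vec_set_mult_right[OF u1])
  have "outer p q = mat_add (mat_add (outer p q) (outer (\<lambda>i. u1 i * y) z1)) (outer u z1)"
    by (simp add: mat_add_def outer_def u_def algebra_simps)
  also have "\<dots> = mat_add
      (sandwich m n P (comm m n P (outer p z1) (outer u1 z2)) (comm m n P (outer u2 z1) (outer u1 q)))
      (sandwich m n P (comm m n P (outer u z1) (outer u1 z2)) (comm m n P (outer u2 z1) (outer u1 z1)))"
    unfolding comm_prod_dual_pair y_def u_def by (simp add: bil_form_mult_right dual mat_add_def outer_def)
  also have "\<dots> \<in> fin_sums (comm_prods m n P)"
    using p q u u1 u2 z1 z2
    by (intro fin_sums_mat_add comm_prod_in_fin_sums outer_in_mat_set)
  finally show ?thesis .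
qed

end

lemma mat_set_eq_fin_sums_comm_prods_if_rank_ge_2:
  fixes P :: "nat \<Rightarrow> nat \<Rightarrow> 'a::division_ring"
  assumes "2 \<le> mat_rank n m P"
  shows "mat_set m n = fin_sums (comm_prods m n P)"
proof -
  obtain k1 k2 where k: "k1 < m" "k2 < m" "k1 \<noteq> k2" "cols_indep n P {k1, k2}"
    using assms by (rule mat_rank_ge_2_obtains_pair)
  obtain z1 z2 where z: "z1 \<in> vec_set n" "z2 \<in> vec_set n"
    "bil_form m n P z1 (unit_vec k1) = 1" "bil_form m n P z2 (unit_vec k2) = 1"
    "bil_form m n P z2 (unit_vec k1) = 0" "bil_form m n P z1 (unit_vec k2) = 0"
    using k by (rule dual_rows_exist)
  show ?thesis
    using outer_in_fin_sums_dual_pair[OF unit_vec_in_vec_set[OF k(1)] unit_vec_in_vec_set[OF k(2)] z]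
    by (rule mat_set_eq_fin_sums_comm_prodsI)
qed

section \<open>Rank one over a noncommutative division ring\<close>

lemma eq_sum_comm_prods_scalar:
  fixes a b x :: "'a::division_ring"
  assumes "a * b \<noteq> b * a"
  obtains u where
    "x = (u * a * b - b * (u * a)) * (a * b - b * a) + (b * u - u * b) * (a * (a * b) - a * b * a)"
proof
  define c where "c = a * b - b * a"
  have "c * c \<noteq> 0" using assms by (simp add: c_def)
  then have "x = x * inverse (c * c) * c * c" by (simp add: mult.assoc)
  also have "\<dots> = (x * inverse (c * c) * a * b - b * (x * inverse (c * c) * a)) * (a * b - b * a)
      + (b * (x * inverse (c * c)) - x * inverse (c * c) * b) * (a * (a * b) - a * b * a)"
    by (simp add: c_def algebra_simps)
  finally show "x = \<dots>" .
qed

text \<open>With respect to the idempotent e = w z^T, the lemmas peirce_ij below handle the Peirce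
  components e A e, e A (1 - e), (1 - e) A e and (1 - e) A (1 - e).\<close>

context
  fixes m n :: nat and P :: "nat \<Rightarrow> nat \<Rightarrow> 'a::division_ring" and w z :: "nat \<Rightarrow> 'a" and a b :: 'a
  assumes w: "w \<in> vec_set m" and z: "z \<in> vec_set n" and zw: "bil_form m n P z w = 1"
    and noncomm: "a * b \<noteq> b * a"
begin

lemma comm_prod_peirce_11:
  "sandwich m n P (comm m n P (outer (\<lambda>i. w i * s) z) (outer (\<lambda>i. w i * t) z))
     (comm m n P (outer (\<lambda>i. w i * s') z) (outer (\<lambda>i. w i * t') z))
   = outer (\<lambda>i. w i * ((s * t - t * s) * (s' * t' - t' * s'))) z"
  by (simp add: comm_prod_outer_simps bil_form_mult_right zw)
    (simp add: mat_sub_def outer_def algebra_simps)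

lemma peirce_11_in_fin_sums: "outer (\<lambda>i. w i * x) z \<in> fin_sums (comm_prods m n P)"
proof -
  obtain u where u:
    "x = (u * a * b - b * (u * a)) * (a * b - b * a) + (b * u - u * b) * (a * (a * b) - a * b * a)"
    using eq_sum_comm_prods_scalar[OF noncomm] by blast
  have wz: "outer (\<lambda>i. w i * y) z \<in> mat_set m n" for y
    by (intro outer_in_mat_set vec_set_mult_right w z)
  have "outer (\<lambda>i. w i * x) z = mat_add
      (outer (\<lambda>i. w i * ((u * a * b - b * (u * a)) * (a * b - b * a))) z)
      (outer (\<lambda>i. w i * ((b * u - u * b) * (a * (a * b) - a * b * a))) z)"
    by (subst u) (simp add: mat_add_def outer_def algebra_simps)
  also have "\<dots> = mat_add
      (sandwich m n P (comm m n P (outer (\<lambda>i. w i * (u * a)) z) (outer (\<lambda>i. w i * b) z))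
        (comm m n P (outer (\<lambda>i. w i * a) z) (outer (\<lambda>i. w i * b) z)))
      (sandwich m n P (comm m n P (outer (\<lambda>i. w i * b) z) (outer (\<lambda>i. w i * u) z))
        (comm m n P (outer (\<lambda>i. w i * a) z) (outer (\<lambda>i. w i * (a * b)) z)))"
    by (simp only: comm_prod_peirce_11 mult.assoc)
  also have "\<dots> \<in> fin_sums (comm_prods m n P)"
    by (intro fin_sums_mat_add comm_prod_in_fin_sums wz)
  finally show ?thesis .
qed

lemma peirce_12_in_fin_sums:
  assumes q: "q \<in> vec_set n" and qw: "bil_form m n P q w = 0"
  shows "outer (\<lambda>i. w i * x) q \<in> fin_sums (comm_prods m n P)"
proof -
  define t where "t = inverse (a * b - b * a) * x"
  have "outer (\<lambda>i. w i * x) q = outer (\<lambda>i. w i * ((a * b - b * a) * t)) q"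
    using noncomm by (simp add: t_def mult.assoc[symmetric])
  also have "\<dots> = sandwich m n P (comm m n P (outer (\<lambda>i. w i * a) z) (outer (\<lambda>i. w i * b) z))
      (comm m n P (outer w z) (outer (\<lambda>i. w i * t) q))"
    by (simp add: comm_prod_outer_simps bil_form_mult_right zw qw)
      (simp add: mat_sub_def outer_def algebra_simps)
  also have "\<dots> \<in> fin_sums (comm_prods m n P)"
    by (intro comm_prod_in_fin_sums outer_in_mat_set vec_set_mult_right w z q)
  finally show ?thesis .
qed

lemma peirce_21_in_fin_sums:
  assumes p: "p \<in> vec_set m" and zp: "bil_form m n P z p = 0"
  shows "outer (\<lambda>i. p i * x) z \<in> fin_sums (comm_prods m n P)"
proof -
  define s where "s = x * inverse (a * b - b * a)"
  have "outer (\<lambda>i. p i * x) z = outer (\<lambda>i. p i * (s * (a * b - b * a))) z"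
    using noncomm by (simp add: s_def mult.assoc)
  also have "\<dots> = sandwich m n P (comm m n P (outer (\<lambda>i. p i * s) z) (outer w z))
      (comm m n P (outer (\<lambda>i. w i * a) z) (outer (\<lambda>i. w i * b) z))"
    by (simp add: comm_prod_outer_simps bil_form_mult_right zw zp)
      (simp add: mat_sub_def outer_def algebra_simps)
  also have "\<dots> \<in> fin_sums (comm_prods m n P)"
    by (intro comm_prod_in_fin_sums outer_in_mat_set vec_set_mult_right w z p)
  finally show ?thesis .
qed

lemma peirce_22_in_fin_sums:
  assumes p: "p \<in> vec_set m" and zp: "bil_form m n P z p = 0"
    and q: "q \<in> vec_set n" and qw: "bil_form m n P q w = 0"
  shows "outer p q \<in> fin_sums (comm_prods m n P)"
proof -
  have "outer p q = sandwich m n P (comm m n P (outer p z) (outer w z)) (comm m n P (outer w z) (outer w q))"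
    by (simp add: comm_prod_outer_simps zw zp qw) (simp add: mat_sub_def outer_def)
  also have "\<dots> \<in> fin_sums (comm_prods m n P)"
    by (intro comm_prod_in_fin_sums outer_in_mat_set w z p q)
  finally show ?thesis .
qed

lemma outer_in_fin_sums_noncomm:
  assumes p: "p \<in> vec_set m" and q: "q \<in> vec_set n"
  shows "outer p q \<in> fin_sums (comm_prods m n P)"
proof -
  define x where "x = bil_form m n P z p"
  define y where "y = bil_form m n P q w"
  define p' where "p' = (\<lambda>i. p i - w i * x)"
  define q' where "q' = (\<lambda>j. q j - y * z j)"
  have p': "p' \<in> vec_set m" and q': "q' \<in> vec_set n"
    unfolding p'_def q'_def by (intro vec_set_diff vec_set_mult_left vec_set_mult_right p q w z)+
  have zp': "bil_form m n P z p' = 0"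
    unfolding p'_def by (simp add: bil_form_diff_right bil_form_mult_right zw x_def)
  have q'w: "bil_form m n P q' w = 0"
    unfolding q'_def by (simp add: bil_form_diff_left bil_form_mult_left zw y_def)
  have "outer p q = mat_add (outer p' q')
      (mat_add (outer (\<lambda>i. w i * x) q') (mat_add (outer (\<lambda>i. p' i * y) z) (outer (\<lambda>i. w i * (x * y)) z)))"
    by (simp add: p'_def q'_def mat_add_def outer_def algebra_simps)
  also have "\<dots> \<in> fin_sums (comm_prods m n P)"
    by (intro fin_sums_mat_add peirce_22_in_fin_sums peirce_12_in_fin_sums peirce_21_in_fin_sums
        peirce_11_in_fin_sums p' q' zp' q'w)
  finally show ?thesis .
qed

end

lemma mat_set_eq_fin_sums_comm_prods_if_noncomm:
  fixes P :: "nat \<Rightarrow> nat \<Rightarrow> 'a::division_ring" and a b :: 'a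
  assumes rank: "0 < mat_rank n m P" and noncomm: "a * b \<noteq> b * a"
  shows "mat_set m n = fin_sums (comm_prods m n P)"
proof -
  obtain s k where s: "s < n" and k: "k < m" and nonzero: "P s k \<noteq> 0"
    using rank by (rule mat_rank_pos_obtains_entry)
  define z where "z = (\<lambda>l. inverse (P s k) * unit_vec s l)"
  have z: "z \<in> vec_set n" unfolding z_def by (intro vec_set_mult_left unit_vec_in_vec_set s)
  have "bil_form m n P z (unit_vec k) = 1"
    using s k nonzero by (simp add: z_def bil_form_mult_left bil_form_unit_vec)
  from outer_in_fin_sums_noncomm[OF unit_vec_in_vec_set[OF k] z this noncomm]
  show ?thesis by (rule mat_set_eq_fin_sums_comm_prodsI)
qed

section \<open>Rank one over a field\<close>

context
  fixes m n :: nat and P :: "nat \<Rightarrow> nat \<Rightarrow> 'a::ring_1" and \<alpha> \<beta> :: "nat \<Rightarrow> 'a"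
  assumes factor: "\<And>l k. l < n \<Longrightarrow> k < m \<Longrightarrow> P l k = \<alpha> l * \<beta> k"
begin

lemma sandwich_factored:
  "sandwich m n P X Y = outer (\<lambda>i. \<Sum>l<n. X i l * \<alpha> l) (\<lambda>j. \<Sum>k<m. \<beta> k * Y k j)"
proof (intro ext)
  fix i j
  have "sandwich m n P X Y i j = (\<Sum>k<m. \<Sum>l<n. X i l * \<alpha> l * (\<beta> k * Y k j))"
    unfolding sandwich_def mat_mult_def by (simp add: factor sum_distrib_right mult.assoc)
  also have "\<dots> = (\<Sum>l<n. X i l * \<alpha> l) * (\<Sum>k<m. \<beta> k * Y k j)"
    by (simp add: sum.swap[of _ "{..<m}"] sum_product)
  finally show "sandwich m n P X Y i j = outer (\<lambda>i. \<Sum>l<n. X i l * \<alpha> l) (\<lambda>j. \<Sum>k<m. \<beta> k * Y k j) i j"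
    by (simp add: outer_def)
qed

lemma bil_form_sandwich_factored:
  "bil_form n m (sandwich m n P X Y) \<beta> \<alpha> = bil_form n m X \<beta> \<alpha> * bil_form n m Y \<beta> \<alpha>"
proof -
  have swap: "(\<Sum>l<m. \<beta> l * (\<Sum>j<n. Z l j * \<alpha> j)) = bil_form n m Z \<beta> \<alpha>" for Z
    unfolding bil_form_def by (simp add: sum_distrib_left sum_distrib_right mult.assoc sum.swap[of _ "{..<m}"])
  show ?thesis
    unfolding sandwich_factored bil_form_outer swap
    by (simp add: bil_form_def sum_distrib_left sum_distrib_right mult.assoc)
qed

lemma bil_form_fin_sums_comm_prods:
  assumes comm: "\<And>x y::'a. x * y = y * x" and x: "x \<in> fin_sums (comm_prods m n P)"
  shows "bil_form n m x \<beta> \<alpha> = 0"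
  using x
proof induction
  case zero
  then show ?case by (simp add: bil_form_def)
next
  case (add x y)
  have comm_0: "bil_form n m (comm m n P A B) \<beta> \<alpha> = 0" for A B
    by (simp add: comm_def bil_form_mat_sub bil_form_sandwich_factored comm)
  from add.hyps(1) have "bil_form n m x \<beta> \<alpha> = 0"
    by (auto simp: comm_prods_def bil_form_sandwich_factored comm_0)
  with add.IH show ?case by (simp add: bil_form_mat_add)
qed

lemma mat_set_ne_fin_sums_comm_prods_factored:
  assumes comm: "\<And>x y::'a. x * y = y * x" and s: "s < n" and k: "k < m" and nonzero: "P s k \<noteq> 0"
  shows "mat_set m n \<noteq> fin_sums (comm_prods m n P)"
proof
  assume eq: "mat_set m n = fin_sums (comm_prods m n P)"
  define E where "E = outer (unit_vec k) (unit_vec s :: nat \<Rightarrow> 'a)"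
  have "E \<in> fin_sums (comm_prods m n P)"
    unfolding E_def eq[symmetric] by (intro outer_in_mat_set unit_vec_in_vec_set s k)
  then have "bil_form n m E \<beta> \<alpha> = 0" by (rule bil_form_fin_sums_comm_prods[OF comm])
  moreover have "bil_form n m E \<beta> \<alpha> = P s k"
    using s k by (simp add: E_def bil_form_outer unit_vec_def factor comm
        if_distrib[of "times _"] if_distrib[of "\<lambda>x. x * _"] cong: if_cong)
  ultimately show False using nonzero by simp
qed

end

lemma mat_set_ne_fin_sums_comm_prods_if_rank_1:
  fixes P :: "nat \<Rightarrow> nat \<Rightarrow> 'a::division_ring"
  assumes comm: "\<And>x y::'a. x * y = y * x" and rank: "mat_rank n m P = 1"
  shows "mat_set m n \<noteq> fin_sums (comm_prods m n P)"
proof -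
  obtain k where k: "k < m" "cols_indep n P {k}"
    and dep: "\<forall>k'<m. k' \<noteq> k \<longrightarrow> \<not> cols_indep n P {k, k'}"
    using rank by (rule mat_rank_eq_1_obtains_column)
  obtain s where s: "s < n" "P s k \<noteq> 0"
    using k(2) by (rule cols_indep_singleton_obtains_entry)
  obtain \<beta> where "\<forall>l<n. \<forall>k'<m. P l k' = P l k * \<beta> k'"
    using s dep by (rule rank_one_factorization)
  then have "P l k' = P l k * \<beta> k'" if "l < n" "k' < m" for l k'
    using that by blast
  then show ?thesis
    using comm s(1) k(1) s(2) by (rule mat_set_ne_fin_sums_comm_prods_factored[where P = P])
qed

theorem theorem2p5:
  fixes P :: "nat \<Rightarrow> nat \<Rightarrow> 'a::division_ring" and m n r :: nat
  assumes "2 \<le> m" and "2 \<le> n"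
    and "P \<in> mat_set n m"
    and "mat_rank n m P = r"
  shows "(r \<ge> 2 \<longrightarrow> mat_set m n = fin_sums (comm_prods m n P))
       \<and> (r = 1 \<longrightarrow> (mat_set m n = fin_sums (comm_prods m n P)
                        \<longleftrightarrow> \<not> (\<forall>a b :: 'a. a * b = b * a)))"
proof (intro conjI impI)
  assume "2 \<le> r"
  then show "mat_set m n = fin_sums (comm_prods m n P)"
    using assms(4) by (intro mat_set_eq_fin_sums_comm_prods_if_rank_ge_2) simp
next
  assume r: "r = 1"
  show "mat_set m n = fin_sums (comm_prods m n P) \<longleftrightarrow> \<not> (\<forall>a b :: 'a. a * b = b * a)"
  proof
    assume "mat_set m n = fin_sums (comm_prods m n P)"
    then show "\<not> (\<forall>a b :: 'a. a * b = b * a)"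
      using mat_set_ne_fin_sums_comm_prods_if_rank_1 r assms(4) by metis
  next
    assume "\<not> (\<forall>a b :: 'a. a * b = b * a)"
    then obtain a b :: 'a where "a * b \<noteq> b * a" by blast
    then show "mat_set m n = fin_sums (comm_prods m n P)"
      using r assms(4) by (intro mat_set_eq_fin_sums_comm_prods_if_noncomm) simp_all
  qed
qed

end
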